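(* For all KAT-morphisms $(\mathfrak{s},\mathfrak{t}): (\Sigma_0,T_0) \to (\Sigma_1,T_1)$ and all $e \in \mathsf{KAT}(\Sigma_0,T_0)$, we have $L(\mathrm{apply}^\mathfrak{s}_\mathfrak{t}(e)) = \mathrm{apply}^{\mathfrak{s}'}_\mathfrak{t}(L(e))$, where $\mathfrak{s}'$ is given by $\mathfrak{s}'(p) = L(\mathfrak{s}(p))$.
   Context: $\mathsf{KAT}(\Sigma,T)$ is the set of KAT expressions over action alphabet $\Sigma$ and test alphabet $T$, $\mathsf{BA}(T)$ the set of Boolean test expressions over $T$, $\mathsf{At}_T = 2^T$ the set of atoms, and $L(e)$ the guarded-string language semantics of a KAT expression $e$; $\mathcal{G}(\Sigma,T)$ denotes the set of regular guarded languages (sets of strings in $\mathsf{At}_T(\Sigma\mathsf{At}_T)^*$). Guarded composition $w\diamond x$ of $w=w'\alpha$ and $x=\alpha x'$ is $w'\alpha x'$ (defined only when the last atom of $w$ equals the first atom of $x$). A KAT-morphism $(\mathfrak{s},\mathfrak{t}):(\Sigma_0,T_0)\to(\Sigma_1,T_1)$ is a pair of functions $\mathfrak{s}:\Sigma_0\to\mathsf{KAT}(\Sigma_1,T_1)$ and $\mathfrak{t}:T_0\to\mathsf{BA}(T_1)$; on expressions, $\mathrm{apply}^\mathfrak{s}_\mathfrak{t}(e)$ is obtained from $e$ by replacing each test $t\in T_0$ by $\mathfrak{t}(t)$ and each action $p\in\Sigma_0$ by $\mathfrak{s}(p)$. For a guarded language morphism $(\mathfrak{s},\mathfrak{t})$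 with $\mathfrak{s}:\Sigma_0\to\mathcal{G}(\Sigma_1,T_1)$ and $\mathfrak{t}:T_0\to\mathsf{BA}(T_1)$: an atom $\beta\in\mathsf{At}_{T_1}$ is $\mathfrak{t}$-consistent with $\alpha\in\mathsf{At}_{T_0}$ if for all $t\in T_0$, $\alpha\le t$ iff $\beta\le\mathfrak{t}(t)$; for $L\in\mathcal{G}(\Sigma_0,T_0)$, $\mathrm{apply}_\mathfrak{t}(L)$ consists of all $\beta_0p_0\beta_1\cdots p_{n-1}\beta_n$ such that $\alpha_0p_0\alpha_1\cdots p_{n-1}\alpha_n\in L$ and each $\beta_i$ is $\mathfrak{t}$-consistent with $\alpha_i$; for $L\in\mathcal{G}(\Sigma_0,T_1)$, $\mathrm{apply}^\mathfrak{s}(L)$ consists of all $\alpha_0\diamond w_0\diamond\alpha_1\diamond\cdots\diamond\alpha_{n-1}\diamond w_{n-1}\diamond\alpha_n$ with $\alpha_0p_0\alpha_1\cdots p_{n-1}\alpha_n\in L$ and $w_i\in\mathfrak{s}(p_i)$; and $\mathrm{apply}^\mathfrak{s}_\mathfrak{t} = \mathrm{apply}^\mathfrak{s}\circ\mathrm{apply}_\mathfrak{t}$. *)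

theory Defs
  imports Main
begin

datatype 't bexp = BZero | BOne | BVar 't | BNot "'t bexp"
  | BAnd "'t bexp" "'t bexp" | BOr "'t bexp" "'t bexp"

datatype ('a, 't) kat = KTest "'t bexp" | KAct 'a
  | KPlus "('a, 't) kat" "('a, 't) kat" | KSeq "('a, 't) kat" "('a, 't) kat"
  | KStar "('a, 't) kat"

text \<open>Atoms are subsets of the test alphabet (At_T = 2^T): the tests that are true.
  An atom alpha satisfies b (alpha \<le> b) iff b evaluates to true under alpha.\<close>

type_synonym 't atom = "'t set"

fun atom_le :: "'t atom \<Rightarrow> 't bexp \<Rightarrow> bool" where
  "atom_le \<alpha> BZero = False"
| "atom_le \<alpha> BOne = True"
| "atom_le \<alpha> (BVar t) = (t \<in> \<alpha>)"
| "atom_le \<alpha> (BNot b) = (\<not> atom_le \<alpha> b)"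
| "atom_le \<alpha> (BAnd b c) = (atom_le \<alpha> b \<and> atom_le \<alpha> c)"
| "atom_le \<alpha> (BOr b c) = (atom_le \<alpha> b \<or> atom_le \<alpha> c)"

text \<open>A guarded string alpha_0 p_0 alpha_1 ... p_{n-1} alpha_n is represented as
  (alpha_0, [(p_0, alpha_1), ..., (p_{n-1}, alpha_n)]).\<close>

type_synonym ('a, 't) gstring = "'t atom \<times> ('a \<times> 't atom) list"

definition last_atom :: "('a, 't) gstring \<Rightarrow> 't atom" where
  "last_atom w = (if snd w = [] then fst w else snd (last (snd w)))"

definition gcomp :: "('a, 't) gstring set \<Rightarrow> ('a, 't) gstring set \<Rightarrow> ('a, 't) gstring set" where
  "gcomp A B = {(fst w, snd w @ snd x) | w x. w \<in> A \<and> x \<in> B \<and> last_atom w = fst x}"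

definition atoms_lang :: "('a, 't) gstring set" where
  "atoms_lang = {(\<alpha>, []) | \<alpha>. True}"

fun gpow :: "('a, 't) gstring set \<Rightarrow> nat \<Rightarrow> ('a, 't) gstring set" where
  "gpow A 0 = atoms_lang"
| "gpow A (Suc n) = gcomp A (gpow A n)"

fun lang :: "('a, 't) kat \<Rightarrow> ('a, 't) gstring set" where
  "lang (KTest b) = {(\<alpha>, []) | \<alpha>. atom_le \<alpha> b}"
| "lang (KAct p) = {(\<alpha>, [(p, \<beta>)]) | \<alpha> \<beta>. True}"
| "lang (KPlus e f) = lang e \<union> lang f"
| "lang (KSeq e f) = gcomp (lang e) (lang f)"
| "lang (KStar e) = (\<Union>n. gpow (lang e) n)"

fun bapply :: "('t0 \<Rightarrow> 't1 bexp) \<Rightarrow> 't0 bexp \<Rightarrow> 't1 bexp" where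
  "bapply t BZero = BZero"
| "bapply t BOne = BOne"
| "bapply t (BVar x) = t x"
| "bapply t (BNot b) = BNot (bapply t b)"
| "bapply t (BAnd b c) = BAnd (bapply t b) (bapply t c)"
| "bapply t (BOr b c) = BOr (bapply t b) (bapply t c)"

fun kat_apply :: "('a0 \<Rightarrow> ('a1, 't1) kat) \<Rightarrow> ('t0 \<Rightarrow> 't1 bexp) \<Rightarrow> ('a0, 't0) kat \<Rightarrow> ('a1, 't1) kat" where
  "kat_apply s t (KTest b) = KTest (bapply t b)"
| "kat_apply s t (KAct p) = s p"
| "kat_apply s t (KPlus e f) = KPlus (kat_apply s t e) (kat_apply s t f)"
| "kat_apply s t (KSeq e f) = KSeq (kat_apply s t e) (kat_apply s t f)"
| "kat_apply s t (KStar e) = KStar (kat_apply s t e)"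

definition t_consistent :: "('t0 \<Rightarrow> 't1 bexp) \<Rightarrow> 't1 atom \<Rightarrow> 't0 atom \<Rightarrow> bool" where
  "t_consistent t \<beta> \<alpha> = (\<forall>x. x \<in> \<alpha> \<longleftrightarrow> atom_le \<beta> (t x))"

definition lapply_t :: "('t0 \<Rightarrow> 't1 bexp) \<Rightarrow> ('a, 't0) gstring set \<Rightarrow> ('a, 't1) gstring set" where
  "lapply_t t L = {(\<beta>0, ys) | \<beta>0 ys \<alpha>0 xs. (\<alpha>0, xs) \<in> L \<and> t_consistent t \<beta>0 \<alpha>0 \<and>
      list_all2 (\<lambda>(p, \<alpha>) (q, \<beta>). p = q \<and> t_consistent t \<beta> \<alpha>) xs ys}"

text \<open>expand s w = { alpha_0 \<diamond> w_0 \<diamond> alpha_1 \<diamond> ... \<diamond> w_{n-1} \<diamond> alpha_n | w_i \<in> s p_i }\<close>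

fun expand :: "('a0 \<Rightarrow> ('a1, 't) gstring set) \<Rightarrow> ('a0, 't) gstring \<Rightarrow> ('a1, 't) gstring set" where
  "expand s (\<alpha>, []) = {(\<alpha>, [])}"
| "expand s (\<alpha>, (p, \<beta>) # xs) = gcomp (gcomp {(\<alpha>, [])} (s p)) (expand s (\<beta>, xs))"

definition lapply_s :: "('a0 \<Rightarrow> ('a1, 't) gstring set) \<Rightarrow> ('a0, 't) gstring set \<Rightarrow> ('a1, 't) gstring set" where
  "lapply_s s L = (\<Union>w\<in>L. expand s w)"

definition lapply_st :: "('a0 \<Rightarrow> ('a1, 't1) gstring set) \<Rightarrow> ('t0 \<Rightarrow> 't1 bexp) \<Rightarrow> ('a0, 't0) gstring set \<Rightarrow> ('a1, 't1) gstring set" where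
  "lapply_st s t L = lapply_s s (lapply_t t L)"

end

theory Submission
  imports Defs
begin

text \<open>Every atom \<beta> over T1 is t-consistent with exactly one atom over T0, namely the set of
  tests whose image under t is satisfied by \<beta>. Hence lapply_t t is the preimage of a language
  under the letter-wise projection of guarded strings, and since this projection commutes with
  guarded composition, lapply_t t preserves composition, unions and tests. Expanding a guarded
  string turns concatenation into guarded composition, so lapply_s preserves the same
  operations. The two sides of the theorem therefore satisfy the same recursion over e.\<close>

lemma last_atom_append:
  "last_atom w = fst x \<Longrightarrow> last_atom (fst w, snd w @ snd x) = last_atom x"
  by (cases "snd x = []") (simp_all add: last_atom_def)

lemma last_atom_Cons: "last_atom (\<alpha>, (p, \<beta>) # xs) = last_atom (\<beta>, xs)"
  by (simp add: last_atom_def)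

lemma gcompI:
  "w \<in> A \<Longrightarrow> x \<in> B \<Longrightarrow> last_atom w = fst x \<Longrightarrow> (fst w, snd w @ snd x) \<in> gcomp A B"
  unfolding gcomp_def by blast

lemma gcompE:
  assumes "z \<in> gcomp A B"
  obtains w x where "w \<in> A" "x \<in> B" "last_atom w = fst x" "z = (fst w, snd w @ snd x)"
  using assms unfolding gcomp_def by blast

lemma gcomp_assoc: "gcomp (gcomp A B) C = gcomp A (gcomp B C)"
proof (intro equalityI subsetI)
  fix z assume "z \<in> gcomp (gcomp A B) C"
  then obtain w x y where "w \<in> A" "x \<in> B" "y \<in> C" and wx: "last_atom w = fst x"
    and wx_y: "last_atom (fst w, snd w @ snd x) = fst y" and z: "z = (fst w, (snd w @ snd x) @ snd y)"
    by (auto elim!: gcompE)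
  have "last_atom x = fst y"
    using wx_y last_atom_append[OF wx] by simp
  with \<open>x \<in> B\<close> \<open>y \<in> C\<close> have "(fst x, snd x @ snd y) \<in> gcomp B C"
    by (rule gcompI)
  from gcompI[OF \<open>w \<in> A\<close> this] show "z \<in> gcomp A (gcomp B C)"
    using wx z by simp
next
  fix z assume "z \<in> gcomp A (gcomp B C)"
  then obtain w x y where "w \<in> A" "x \<in> B" "y \<in> C" and xy: "last_atom x = fst y"
    and wx: "last_atom w = fst x" and z: "z = (fst w, snd w @ snd x @ snd y)"
    by (auto elim!: gcompE)
  have "last_atom (fst w, snd w @ snd x) = fst y"
    using last_atom_append[OF wx] xy by simp
  from gcompI[OF gcompI[OF \<open>w \<in> A\<close> \<open>x \<in> B\<close> wx] \<open>y \<in> C\<close>] this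
  show "z \<in> gcomp (gcomp A B) C"
    using z by simp
qed

lemma gcomp_singleton_left: "gcomp {(\<alpha>, [])} A = {w \<in> A. fst w = \<alpha>}"
  unfolding gcomp_def by (auto simp: last_atom_def)

lemma gcomp_singleton_right: "gcomp A {(\<beta>, [])} = {w \<in> A. last_atom w = \<beta>}"
  unfolding gcomp_def by auto

lemma expand_endpoints:
  "v \<in> expand S x \<Longrightarrow> fst v = fst x \<and> last_atom v = last_atom x"
proof (induction S x arbitrary: v rule: expand.induct)
  case (1 S \<alpha>)
  then show ?case by (simp add: last_atom_def)
next
  case (2 S \<alpha> p \<beta> xs)
  then obtain u y where u: "u \<in> gcomp {(\<alpha>, [])} (S p)" and y: "y \<in> expand S (\<beta>, xs)"
    and "last_atom u = fst y" and v: "v = (fst u, snd u @ snd y)"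
    by (auto elim: gcompE)
  then have "last_atom v = last_atom y"
    using last_atom_append by metis
  with u v "2.IH"[OF y] show ?case
    by (simp add: gcomp_singleton_left last_atom_Cons)
qed

lemma expand_append:
  assumes "last_atom w = fst x"
  shows "expand S (fst w, snd w @ snd x) = gcomp (expand S w) (expand S x)"
  using assms
proof (induction "snd w" arbitrary: w)
  case Nil
  then have "w = (fst x, [])"
    by (cases w) (auto simp: last_atom_def)
  moreover have "gcomp {(fst x, [])} (expand S x) = expand S x"
    using expand_endpoints by (fastforce simp: gcomp_singleton_left)
  ultimately show ?case by simp
next
  case (Cons a xs)
  obtain \<alpha> p \<beta> where w: "w = (\<alpha>, (p, \<beta>) # xs)"
    using Cons.hyps(2) by (cases w, cases a) auto
  have "last_atom (\<beta>, xs) = fst x"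
    using Cons.prems w last_atom_Cons by metis
  then have "expand S (\<beta>, xs @ snd x) = gcomp (expand S (\<beta>, xs)) (expand S x)"
    using Cons.hyps(1)[of "(\<beta>, xs)"] by simp
  then show ?case
    using w by (simp add: gcomp_assoc)
qed

lemma lapply_s_gcomp: "lapply_s S (gcomp A B) = gcomp (lapply_s S A) (lapply_s S B)"
proof (intro equalityI subsetI)
  fix z assume "z \<in> lapply_s S (gcomp A B)"
  then obtain u v where "u \<in> A" "v \<in> B" "last_atom u = fst v"
    and "z \<in> expand S (fst u, snd u @ snd v)"
    unfolding lapply_s_def by (auto elim: gcompE)
  then have "z \<in> gcomp (expand S u) (expand S v)"
    by (simp add: expand_append)
  with \<open>u \<in> A\<close> \<open>v \<in> B\<close> show "z \<in> gcomp (lapply_s S A) (lapply_s S B)"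
    unfolding lapply_s_def gcomp_def by blast
next
  fix z assume "z \<in> gcomp (lapply_s S A) (lapply_s S B)"
  then obtain u v w x where "u \<in> A" "v \<in> B" "w \<in> expand S u" "x \<in> expand S v"
    and wx: "last_atom w = fst x" and z: "z = (fst w, snd w @ snd x)"
    unfolding lapply_s_def by (elim gcompE) blast
  then have uv: "last_atom u = fst v"
    using expand_endpoints by metis
  have "z \<in> gcomp (expand S u) (expand S v)"
    unfolding z using \<open>w \<in> expand S u\<close> \<open>x \<in> expand S v\<close> wx by (rule gcompI)
  then have "z \<in> expand S (fst u, snd u @ snd v)"
    using uv by (simp add: expand_append)
  moreover have "(fst u, snd u @ snd v) \<in> gcomp A B"
    using \<open>u \<in> A\<close> \<open>v \<in> B\<close> uv by (rule gcompI)
  ultimately show "z \<in> lapply_s S (gcomp A B)"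
    unfolding lapply_s_def by blast
qed

lemma lapply_s_atoms: "lapply_s S {(\<alpha>, []) | \<alpha>. P \<alpha>} = {(\<alpha>, []) | \<alpha>. P \<alpha>}"
  unfolding lapply_s_def by auto

lemma lapply_s_Un: "lapply_s S (A \<union> B) = lapply_s S A \<union> lapply_s S B"
  unfolding lapply_s_def by auto

lemma lapply_s_UN: "lapply_s S (\<Union>n. A n) = (\<Union>n. lapply_s S (A n))"
  unfolding lapply_s_def by auto

lemma lapply_s_action: "lapply_s S {(\<alpha>, [(p, \<beta>)]) | \<alpha> \<beta>. True} = S p"
proof (intro equalityI subsetI)
  fix w assume "w \<in> lapply_s S {(\<alpha>, [(p, \<beta>)]) | \<alpha> \<beta>. True}"
  then show "w \<in> S p"
    unfolding lapply_s_def by (auto simp: gcomp_singleton_left gcomp_singleton_right)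
next
  fix w assume "w \<in> S p"
  then have "w \<in> expand S (fst w, [(p, last_atom w)])"
    by (simp add: gcomp_singleton_left gcomp_singleton_right)
  then show "w \<in> lapply_s S {(\<alpha>, [(p, \<beta>)]) | \<alpha> \<beta>. True}"
    unfolding lapply_s_def by blast
qed

definition proj_atom :: "('t0 \<Rightarrow> 't1 bexp) \<Rightarrow> 't1 atom \<Rightarrow> 't0 atom" where
  "proj_atom t \<beta> = {x. atom_le \<beta> (t x)}"

definition proj_gstring :: "('t0 \<Rightarrow> 't1 bexp) \<Rightarrow> ('a, 't1) gstring \<Rightarrow> ('a, 't0) gstring" where
  "proj_gstring t w = (proj_atom t (fst w), map (\<lambda>(q, \<beta>). (q, proj_atom t \<beta>)) (snd w))"

lemma t_consistent_iff_proj_atom: "t_consistent t \<beta> \<alpha> \<longleftrightarrow> \<alpha> = proj_atom t \<beta>"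
  unfolding t_consistent_def proj_atom_def by auto

lemma atom_le_bapply: "atom_le \<beta> (bapply t b) = atom_le (proj_atom t \<beta>) b"
  by (induction b) (auto simp: proj_atom_def)

lemma list_all2_proj_atom_iff:
  "list_all2 (\<lambda>(p, \<alpha>) (q, \<beta>). p = q \<and> \<alpha> = proj_atom t \<beta>) xs ys
    \<longleftrightarrow> xs = map (\<lambda>(q, \<beta>). (q, proj_atom t \<beta>)) ys"
  by (induction ys arbitrary: xs) (auto simp: list_all2_Cons2 split: prod.splits)

lemma lapply_t_eq_vimage: "lapply_t t L = proj_gstring t -` L"
  unfolding lapply_t_def proj_gstring_def
  by (auto simp: t_consistent_iff_proj_atom list_all2_proj_atom_iff)

lemma last_atom_proj_gstring: "last_atom (proj_gstring t w) = proj_atom t (last_atom w)"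
  unfolding last_atom_def proj_gstring_def by (auto simp: last_map split: prod.splits)

lemma lapply_t_gcomp: "lapply_t t (gcomp A B) = gcomp (lapply_t t A) (lapply_t t B)"
proof (intro equalityI subsetI)
  let ?proj = "\<lambda>(q, \<beta>). (q, proj_atom t \<beta>)"
  fix w assume "w \<in> lapply_t t (gcomp A B)"
  then obtain u v where "u \<in> A" "v \<in> B" and uv: "last_atom u = fst v"
    and w: "proj_gstring t w = (fst u, snd u @ snd v)"
    unfolding lapply_t_eq_vimage by (auto elim!: gcompE)
  then obtain ys1 ys2 where ys: "snd w = ys1 @ ys2"
    "map ?proj ys1 = snd u" "map ?proj ys2 = snd v"
    by (auto simp: proj_gstring_def map_eq_append_conv)
  define w1 where "w1 = (fst w, ys1)"
  define w2 where "w2 = (last_atom w1, ys2)"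
  have w1: "proj_gstring t w1 = u"
    using w ys unfolding w1_def proj_gstring_def by (cases u) auto
  then have "proj_gstring t w2 = v"
    using ys uv last_atom_proj_gstring[of t w1] unfolding w2_def proj_gstring_def
    by (cases v) auto
  with w1 \<open>u \<in> A\<close> \<open>v \<in> B\<close> have "(fst w1, snd w1 @ snd w2) \<in> gcomp (lapply_t t A) (lapply_t t B)"
    unfolding lapply_t_eq_vimage by (intro gcompI) (simp_all add: w2_def)
  moreover have "w = (fst w1, snd w1 @ snd w2)"
    using ys unfolding w1_def w2_def by (cases w) auto
  ultimately show "w \<in> gcomp (lapply_t t A) (lapply_t t B)"
    by simp
next
  fix z assume "z \<in> gcomp (lapply_t t A) (lapply_t t B)"
  then obtain w x where "proj_gstring t w \<in> A" "proj_gstring t x \<in> B"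
    and wx: "last_atom w = fst x" and z: "z = (fst w, snd w @ snd x)"
    unfolding lapply_t_eq_vimage by (elim gcompE) blast
  moreover have "last_atom (proj_gstring t w) = fst (proj_gstring t x)"
    using wx by (simp only: last_atom_proj_gstring) (simp add: proj_gstring_def)
  ultimately have "(fst (proj_gstring t w), snd (proj_gstring t w) @ snd (proj_gstring t x)) \<in> gcomp A B"
    by (intro gcompI)
  then show "z \<in> lapply_t t (gcomp A B)"
    unfolding lapply_t_eq_vimage by (simp add: z proj_gstring_def)
qed

lemma lapply_t_atoms:
  "lapply_t t {(\<alpha>, []) | \<alpha>. P \<alpha>} = {(\<beta>, []) | \<beta>. P (proj_atom t \<beta>)}"
  unfolding lapply_t_eq_vimage proj_gstring_def by (force simp: prod_eq_iff)

lemma lapply_t_action: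
  "lapply_t t {(\<alpha>, [(p, \<beta>)]) | \<alpha> \<beta>. True} = {(\<alpha>, [(p, \<beta>)]) | \<alpha> \<beta>. True}"
  unfolding lapply_t_eq_vimage proj_gstring_def by auto

lemma lapply_st_gcomp: "lapply_st S t (gcomp A B) = gcomp (lapply_st S t A) (lapply_st S t B)"
  unfolding lapply_st_def by (simp add: lapply_t_gcomp lapply_s_gcomp)

lemma lapply_st_atoms_lang: "lapply_st S t atoms_lang = atoms_lang"
  unfolding lapply_st_def atoms_lang_def lapply_t_atoms lapply_s_atoms by simp

lemma lapply_st_gpow: "lapply_st S t (gpow A n) = gpow (lapply_st S t A) n"
  by (induction n) (simp_all add: lapply_st_atoms_lang lapply_st_gcomp)

lemma lapply_st_Un: "lapply_st S t (A \<union> B) = lapply_st S t A \<union> lapply_st S t B"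
  unfolding lapply_st_def lapply_t_eq_vimage by (simp add: vimage_Un lapply_s_Un)

lemma lapply_st_UN: "lapply_st S t (\<Union>n. A n) = (\<Union>n. lapply_st S t (A n))"
  unfolding lapply_st_def lapply_t_eq_vimage by (simp add: vimage_UN lapply_s_UN)

lemma lapply_st_test: "lapply_st S t (lang (KTest b)) = lang (KTest (bapply t b))"
  by (simp add: lapply_st_def lapply_t_atoms lapply_s_atoms atom_le_bapply)

lemma lapply_st_action: "lapply_st S t (lang (KAct p)) = S p"
  unfolding lapply_st_def lang.simps lapply_t_action lapply_s_action ..

theorem proposition5p3:
  fixes s :: "'a0 \<Rightarrow> ('a1, 't1) kat" and t :: "'t0 \<Rightarrow> 't1 bexp" and e :: "('a0, 't0) kat"
  shows "lang (kat_apply s t e) = lapply_st (\<lambda>p. lang (s p)) t (lang e)"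
proof (induction e)
  case (KTest b)
  show ?case by (simp only: lapply_st_test kat_apply.simps)
next
  case (KAct p)
  show ?case by (simp only: lapply_st_action kat_apply.simps)
next
  case (KPlus e f)
  then show ?case by (simp add: lapply_st_Un)
next
  case (KSeq e f)
  then show ?case by (simp add: lapply_st_gcomp)
next
  case (KStar e)
  then show ?case by (simp add: lapply_st_UN lapply_st_gpow)
qed

end
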